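(* Let $k\le l$ be positive integers with $\gcd(k,l)=1$, let $n\ge1$, $m\ge 0$ be integers, write $m=qn+r$ with integers $q\ge 0$, $0\le r<n$, and let $A=(a_{ij})\in\mathcal D^{k,l}(m,n)$. Let $I$ be a set of rows and $J$ a set of columns of $A$ such that $a_{ij}\le q$ for all $i\in I$, $j\in J$, and such that $|I|+|J|$ is as large as possible among all such pairs. Put $t_1=nk-|I|$ and $t_2=nl-|J|$. Then $$qt_1t_2+r(t_1l+t_2k)\ge klnr.$$
   Context: $\mathcal D^{k,l}(m,n)$ denotes the set of all $nk\times nl$ matrices with nonnegative integer entries all of whose row sums equal $ml$ and all of whose column sums equal $mk$. *)

theory Defs
  imports Main
begin

text \<open>A matrix is represented as a function A :: nat => nat => nat, of which only the
  entries A i j with i < n*k, j < n*l are relevant.\<close>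
definition in_D :: "nat \<Rightarrow> nat \<Rightarrow> nat \<Rightarrow> nat \<Rightarrow> (nat \<Rightarrow> nat \<Rightarrow> nat) \<Rightarrow> bool" where
  "in_D k l m n A \<longleftrightarrow>
     (\<forall>i < n*k. (\<Sum>j<n*l. A i j) = m*l) \<and>
     (\<forall>j < n*l. (\<Sum>i<n*k. A i j) = m*k)"

end

theory Submission
  imports Defs
begin

text \<open>Counting the total \<open>nk \<cdot> ml\<close> this way bounds it by
  \<open>|I| |J| q + t\<^sub>1 ml + t\<^sub>2 mk\<close>, and substituting \<open>m = qn + r\<close> turns this bound into the claim.\<close>

lemma sum_le_block_plus_margins:
  fixes A :: "'a \<Rightarrow> 'b \<Rightarrow> 'c :: canonically_ordered_monoid_add"
  assumes "finite R" "finite C" "I \<subseteq> R" "J \<subseteq> C"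
  shows "(\<Sum>i\<in>R. \<Sum>j\<in>C. A i j)
         \<le> (\<Sum>i\<in>I. \<Sum>j\<in>J. A i j) + (\<Sum>i\<in>R-I. \<Sum>j\<in>C. A i j) + (\<Sum>j\<in>C-J. \<Sum>i\<in>R. A i j)"
proof -
  have "(\<Sum>i\<in>R. \<Sum>j\<in>C. A i j) = (\<Sum>i\<in>I. \<Sum>j\<in>C. A i j) + (\<Sum>i\<in>R-I. \<Sum>j\<in>C. A i j)"
    using sum.subset_diff[OF assms(3,1)] by (simp add: add.commute)
  also have "(\<Sum>i\<in>I. \<Sum>j\<in>C. A i j) = (\<Sum>i\<in>I. \<Sum>j\<in>J. A i j) + (\<Sum>i\<in>I. \<Sum>j\<in>C-J. A i j)"
  proof -
    have "sum (A i) C = sum (A i) J + sum (A i) (C-J)" for i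
      using sum.subset_diff[OF assms(4,2)] by (simp add: add.commute)
    then show ?thesis
      by (simp add: sum.distrib)
  qed
  also have "(\<Sum>i\<in>I. \<Sum>j\<in>C-J. A i j) \<le> (\<Sum>i\<in>R. \<Sum>j\<in>C-J. A i j)"
    by (rule sum_mono2[OF assms(1,3)]) simp
  also have "(\<Sum>i\<in>R. \<Sum>j\<in>C-J. A i j) = (\<Sum>j\<in>C-J. \<Sum>i\<in>R. A i j)"
    by (rule sum.swap)
  finally show ?thesis
    by (simp add: add_mono ac_simps)
qed

lemma margin_bound_iff:
  fixes n k l q r t\<^sub>1 t\<^sub>2 :: nat
  assumes "t\<^sub>1 \<le> n*k" "t\<^sub>2 \<le> n*l"
  shows "n*k*((q*n + r)*l) \<le> (n*k - t\<^sub>1)*((n*l - t\<^sub>2)*q) + t\<^sub>1*((q*n + r)*l) + t\<^sub>2*((q*n + r)*k)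
         \<longleftrightarrow> k*l*n*r \<le> q*t\<^sub>1*t\<^sub>2 + r*(t\<^sub>1*l + t\<^sub>2*k)"
proof -
  have "int ((n*k - t\<^sub>1)*((n*l - t\<^sub>2)*q) + t\<^sub>1*((q*n + r)*l) + t\<^sub>2*((q*n + r)*k))
             - int (n*k*((q*n + r)*l)) = int (q*t\<^sub>1*t\<^sub>2 + r*(t\<^sub>1*l + t\<^sub>2*k)) - int (k*l*n*r)"
    by (simp only: of_nat_add of_nat_mult of_nat_diff[OF assms(1)] of_nat_diff[OF assms(2)])
       (simp add: algebra_simps)
  then show ?thesis
    by linarith
qed

theorem lemma2p3:
  fixes k l n m :: nat and A :: "nat \<Rightarrow> nat \<Rightarrow> nat" and I J :: "nat set"
  assumes "0 < k" and "k \<le> l" and "gcd k l = 1"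
    and "1 \<le> n"
    and "in_D k l m n A"
    and "I \<subseteq> {..<n*k}" and "J \<subseteq> {..<n*l}"
    and "\<forall>i\<in>I. \<forall>j\<in>J. A i j \<le> m div n"
    and "\<forall>I' J'. I' \<subseteq> {..<n*k} \<and> J' \<subseteq> {..<n*l} \<and>
                 (\<forall>i\<in>I'. \<forall>j\<in>J'. A i j \<le> m div n)
                 \<longrightarrow> card I' + card J' \<le> card I + card J"
  shows "let q = m div n; r = m mod n; t1 = n*k - card I; t2 = n*l - card J
         in q*t1*t2 + r*(t1*l + t2*k) \<ge> k*l*n*r"
proof -
  define q where "q = m div n"
  define r where "r = m mod n"
  define t\<^sub>1 where "t\<^sub>1 = n*k - card I"
  define t\<^sub>2 where "t\<^sub>2 = n*l - card J"
  have rows: "(\<Sum>j<n*l. A i j) = m*l" if "i < n*k" for i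
    using assms(5) that unfolding in_D_def by blast
  have cols: "(\<Sum>i<n*k. A i j) = m*k" if "j < n*l" for j
    using assms(5) that unfolding in_D_def by blast
  have card_I: "card ({..<n*k} - I) = t\<^sub>1" and card_J: "card ({..<n*l} - J) = t\<^sub>2"
    using assms(6,7) by (simp_all add: t\<^sub>1_def t\<^sub>2_def card_Diff_subset finite_subset)
  have "n*k*(m*l) = (\<Sum>i<n*k. \<Sum>j<n*l. A i j)"
    using rows by simp
  also have "\<dots> \<le> (\<Sum>i\<in>I. \<Sum>j\<in>J. A i j) + (\<Sum>i\<in>{..<n*k}-I. \<Sum>j<n*l. A i j)
           + (\<Sum>j\<in>{..<n*l}-J. \<Sum>i<n*k. A i j)"
    using sum_le_block_plus_margins[OF _ _ assms(6,7)] by blast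
  also have "(\<Sum>i\<in>{..<n*k}-I. \<Sum>j<n*l. A i j) = t\<^sub>1*(m*l)"
    using rows card_I by simp
  also have "(\<Sum>j\<in>{..<n*l}-J. \<Sum>i<n*k. A i j) = t\<^sub>2*(m*k)"
    using cols card_J by simp
  also have "(\<Sum>i\<in>I. \<Sum>j\<in>J. A i j) \<le> (\<Sum>i\<in>I. \<Sum>j\<in>J. q)"
    using assms(8) unfolding q_def by (intro sum_mono) auto
  also have "\<dots> = (n*k - t\<^sub>1)*((n*l - t\<^sub>2)*q)"
    using assms(6,7) card_mono[of "{..<n*k}" I] card_mono[of "{..<n*l}" J]
    by (simp add: t\<^sub>1_def t\<^sub>2_def)
  finally have "n*k*(m*l) \<le> (n*k - t\<^sub>1)*((n*l - t\<^sub>2)*q) + t\<^sub>1*(m*l) + t\<^sub>2*(m*k)"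
    by simp
  moreover have "m = q*n + r"
    by (simp add: q_def r_def)
  ultimately show ?thesis
    using margin_bound_iff[of t\<^sub>1 n k t\<^sub>2 l q r]
    unfolding Let_def q_def r_def t\<^sub>1_def t\<^sub>2_def by simp
qed

end
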